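(* If $\eta$ is a probability measure, then $\int\varphi\,d\eta=\tau(\varphi)$ for each continuous function $\varphi:\mathbb{X}\to\mathbb{R}$.
   Context: $\mathbb{X}$ is a compact metric space. $(\xi_j)_{j\in\mathbb N}$ is a sequence of finitely additive outer probabilities on $\mathbb{X}$ (set functions on all subsets, values in $[0,1]$, finitely additive, $\xi_j(\mathbb{X})=1$). For $A\subset\mathbb{X}$, $\tau(A)=\limsup_{n\to\infty}\frac1n\sum_{j=0}^{n-1}\xi_j(A)$, and for a bounded measurable $\varphi$, $\tau(\varphi)=\limsup_{n\to\infty}\frac1n\sum_{j=0}^{n-1}\xi_j(\varphi)$ where $\xi_j(\varphi)=\int\varphi\,d\xi_j$. For $Y\subset\mathbb{X}$, $r>0$, $\nu_r(Y)=\inf\sum_{I\in\mathcal I}\tau(I)$ over countable covers $\mathcal I$ of $Y$ by open sets of diameter $\le r$; $\nu(Y)=\sup_{r>0}\nu_r(Y)$; $\eta$ is the restriction of $\nu$ to Borel sets. *)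

theory Defs
  imports "HOL-Analysis.Analysis" "HOL-Probability.Probability"
begin

text \<open>The compact metric space X is modelled as a type 'a::metric_space with
  compact UNIV. A sequence of finitely additive outer probabilities on X:\<close>

definition fa_outer_prob_seq :: "(nat \<Rightarrow> 'a set \<Rightarrow> real) \<Rightarrow> bool" where
  "fa_outer_prob_seq \<xi> \<longleftrightarrow>
     (\<forall>j A. 0 \<le> \<xi> j A \<and> \<xi> j A \<le> 1) \<and>
     (\<forall>j A B. A \<inter> B = {} \<longrightarrow> \<xi> j (A \<union> B) = \<xi> j A + \<xi> j B) \<and>
     (\<forall>j. \<xi> j UNIV = 1)"

text \<open>Integral of a bounded function against a finitely additive probability
  (limit of sums over level-set partitions of mesh 1/(n+1)).\<close>

definition fa_integral :: "('a set \<Rightarrow> real) \<Rightarrow> ('a \<Rightarrow> real) \<Rightarrow> real" where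
  "fa_integral \<mu> \<phi> = lim (\<lambda>n.
     \<Sum>k\<in>(\<lambda>x. \<lfloor>real (Suc n) * \<phi> x\<rfloor>) ` UNIV.
        of_int k / real (Suc n) * \<mu> {x. \<lfloor>real (Suc n) * \<phi> x\<rfloor> = k})"

text \<open>tau(A) = limsup (1/n) sum_{j<n} xi_j(A) (finite since values lie in [0,1]).\<close>

definition tau_set :: "(nat \<Rightarrow> 'a set \<Rightarrow> real) \<Rightarrow> 'a set \<Rightarrow> real" where
  "tau_set \<xi> A = real_of_ereal
     (limsup (\<lambda>n. ereal ((\<Sum>j<n. \<xi> j A) / real n)))"

definition tau_fun :: "(nat \<Rightarrow> 'a set \<Rightarrow> real) \<Rightarrow> ('a \<Rightarrow> real) \<Rightarrow> real" where
  "tau_fun \<xi> \<phi> = real_of_ereal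
     (limsup (\<lambda>n. ereal ((\<Sum>j<n. fa_integral (\<xi> j) \<phi>) / real n)))"

text \<open>nu_r: infimum over countable open covers with diameters \<le> r
  (countable families represented as sequences, padded with empty sets).\<close>

definition nu_r :: "(nat \<Rightarrow> 'a::metric_space set \<Rightarrow> real) \<Rightarrow> real \<Rightarrow> 'a set \<Rightarrow> ennreal" where
  "nu_r \<xi> r Y = (INF I \<in> {I :: nat \<Rightarrow> 'a set.
        (\<forall>n. open (I n) \<and> diameter (I n) \<le> r) \<and> Y \<subseteq> (\<Union>n. I n)}.
        (\<Sum>n. ennreal (tau_set \<xi> (I n))))"

definition nu :: "(nat \<Rightarrow> 'a::metric_space set \<Rightarrow> real) \<Rightarrow> 'a set \<Rightarrow> ennreal" where
  "nu \<xi> Y = (SUP r \<in> {0<..}. nu_r \<xi> r Y)"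

definition eta :: "(nat \<Rightarrow> 'a::metric_space set \<Rightarrow> real) \<Rightarrow> 'a measure" where
  "eta \<xi> = measure_of UNIV (sets borel) (nu \<xi>)"

definition eta_is_prob :: "(nat \<Rightarrow> 'a::metric_space set \<Rightarrow> real) \<Rightarrow> bool" where
  "eta_is_prob \<xi> \<longleftrightarrow> measure_space UNIV (sets borel) (nu \<xi>) \<and> nu \<xi> UNIV = 1"

end

theory Submission
  imports Defs
begin

text \<open>For a closed, hence compact, set F every open cover in the definition of nu may be
  shrunk to a finite one, so finite subadditivity of tau gives tau(F) \<le> eta(F). A continuous
  \<phi> is bounded, and its lower step function of mesh 1/N is a + (1/N) \<Sum>k. 1_F_k with closed
  level sets F_k = {N \<phi> \<ge> k}. Integrating against each \<xi> j and averaging, the Cesaro means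
  of \<xi> j (\<phi>) are eventually below a + (1/N) \<Sum>k. tau(F_k) + 1/N + \<epsilon> \<le> \<integral>\<phi> d\<eta> + 1/N + \<epsilon>.
  Since the finitely additive integral is odd, the same bound for -\<phi> shows that the Cesaro
  means converge to \<integral>\<phi> d\<eta>, so in particular their limsup tau(\<phi>) equals \<integral>\<phi> d\<eta>.\<close>

section \<open>Simple integrals for finitely additive probabilities\<close>

lemma finite_range_add:
  assumes "finite (range f)" "finite (range g)"
  shows "finite (range (\<lambda>x. f x + g x))"
proof (rule finite_subset)
  show "range (\<lambda>x. f x + g x) \<subseteq> (\<lambda>(a, b). a + b) ` (range f \<times> range g)"
    by auto
qed (use assms in simp)

lemma finite_range_sum:
  assumes "finite K" "\<And>k. k \<in> K \<Longrightarrow> finite (range (f k))"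
  shows "finite (range (\<lambda>x. \<Sum>k\<in>K. f k x))"
  using assms by (induction K rule: finite_induct) (auto intro: finite_range_add)

lemma finite_range_indicator: "finite (range (indicator A :: 'a \<Rightarrow> real))"
  by (rule finite_subset[of _ "{0, 1}"]) (auto simp: indicator_def)

locale fa_prob =
  fixes \<mu> :: "'a set \<Rightarrow> real"
  assumes nonneg: "\<And>A. 0 \<le> \<mu> A"
    and additive: "\<And>A B. A \<inter> B = {} \<Longrightarrow> \<mu> (A \<union> B) = \<mu> A + \<mu> B"
    and prob_UNIV: "\<mu> UNIV = 1"
begin

lemma empty [simp]: "\<mu> {} = 0"
  using additive[of "{}" "{}"] by simp

lemma mono: "A \<subseteq> B \<Longrightarrow> \<mu> A \<le> \<mu> B"
  using additive[of A "B - A"] nonneg[of "B - A"] by (simp add: Un_absorb1)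

lemma subadditive: "\<mu> (A \<union> B) \<le> \<mu> A + \<mu> B"
  using additive[of A "B - A"] mono[of "B - A" B] by auto

lemma finitely_additive:
  "finite I \<Longrightarrow> disjoint_family_on A I \<Longrightarrow> \<mu> (\<Union>i\<in>I. A i) = (\<Sum>i\<in>I. \<mu> (A i))"
proof (induction I rule: finite_induct)
  case (insert a I)
  then have "disjoint_family_on A I" "A a \<inter> (\<Union>i\<in>I. A i) = {}"
    by (auto simp: disjoint_family_on_def)
  with insert show ?case by (simp add: additive)
qed simp

lemma sum_fibres:
  assumes "finite W" "\<And>x. p x \<in> W"
  shows "\<mu> A = (\<Sum>w\<in>W. \<mu> (A \<inter> {x. p x = w}))"
proof -
  have "A = (\<Union>w\<in>W. A \<inter> {x. p x = w})" using assms(2) by blast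
  moreover have "disjoint_family_on (\<lambda>w. A \<inter> {x. p x = w}) W"
    by (auto simp: disjoint_family_on_def)
  ultimately show ?thesis using finitely_additive[OF assms(1)] by metis
qed

text \<open>Only meaningful for functions of finite range: otherwise the sum is over an infinite
  set and hence 0.\<close>

definition simple_integral :: "('a \<Rightarrow> real) \<Rightarrow> real" where
  "simple_integral f = (\<Sum>v\<in>range f. v * \<mu> {x. f x = v})"

lemma simple_integral_factor:
  assumes "finite W" "\<And>x. p x \<in> W" "finite (range f)" "\<And>x. f x = c (p x)"
  shows "simple_integral f = (\<Sum>w\<in>W. c w * \<mu> {x. p x = w})"
proof -
  have fibre: "{x. f x = v} \<inter> {x. p x = w} = (if c w = v then {x. p x = w} else {})" for v w
    using assms(4) by auto
  have empty_fibre: "{x. p x = w} = {}" if "c w \<notin> range f" for w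
    using that assms(4) by auto
  have "simple_integral f = (\<Sum>v\<in>range f. \<Sum>w\<in>W. v * \<mu> ({x. f x = v} \<inter> {x. p x = w}))"
    unfolding simple_integral_def
    by (subst sum_fibres[OF assms(1,2)]) (simp add: sum_distrib_left)
  also have "\<dots> = (\<Sum>w\<in>W. \<Sum>v\<in>range f. if c w = v then c w * \<mu> {x. p x = w} else 0)"
    by (subst sum.swap) (simp add: fibre if_distrib cong: if_cong)
  also have "\<dots> = (\<Sum>w\<in>W. c w * \<mu> {x. p x = w})"
    using assms(3) empty_fibre by (intro sum.cong) auto
  finally show ?thesis .
qed

lemma simple_integral_affine:
  assumes "finite (range f)"
  shows "simple_integral (\<lambda>x. a + b * f x) = a + b * simple_integral f"
proof -
  have "simple_integral (\<lambda>x. a + b * f x) = (\<Sum>v\<in>range f. (a + b * v) * \<mu> {x. f x = v})"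
    using assms by (intro simple_integral_factor) (auto intro: finite_range_imageI)
  also have "\<dots> = a * (\<Sum>v\<in>range f. \<mu> {x. f x = v}) + b * simple_integral f"
    by (simp add: simple_integral_def algebra_simps sum.distrib sum_distrib_left)
  also have "(\<Sum>v\<in>range f. \<mu> {x. f x = v}) = 1"
    using sum_fibres[OF assms, of f UNIV] prob_UNIV by simp
  finally show ?thesis by simp
qed

lemma simple_integral_const [simp]: "simple_integral (\<lambda>x. c) = c"
  using simple_integral_affine[of "\<lambda>x. 0" c 0] by simp

lemma simple_integral_indicator: "simple_integral (\<lambda>x. c * indicator A x) = c * \<mu> A"
proof -
  have "simple_integral (\<lambda>x. c * indicator A x)
      = (\<Sum>w\<in>UNIV. (if w then c else 0) * \<mu> {x. (x \<in> A) = w})"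
    by (rule simple_integral_factor[where c = "\<lambda>w. if w then c else 0"])
      (auto intro: finite_range_imageI finite_range_indicator)
  then show ?thesis by (simp add: UNIV_bool)
qed

lemma simple_integral_pair:
  assumes "finite (range f)" "finite (range g)" "finite (range h)" "\<And>x. h x = F (f x) (g x)"
  shows "simple_integral h = (\<Sum>z\<in>range f \<times> range g. F (fst z) (snd z) * \<mu> {x. (f x, g x) = z})"
  by (rule simple_integral_factor) (use assms in auto)

lemma simple_integral_add:
  assumes f: "finite (range f)" and g: "finite (range g)"
  shows "simple_integral (\<lambda>x. f x + g x) = simple_integral f + simple_integral g"
proof -
  let ?P = "\<lambda>z. \<mu> {x. (f x, g x) = z}" and ?W = "range f \<times> range g"
  have "simple_integral (\<lambda>x. f x + g x) = (\<Sum>z\<in>?W. (fst z + snd z) * ?P z)"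
    by (rule simple_integral_pair[OF f g finite_range_add[OF f g], where F = "\<lambda>v w. v + w"]) simp
  also have "\<dots> = (\<Sum>z\<in>?W. fst z * ?P z) + (\<Sum>z\<in>?W. snd z * ?P z)"
    by (simp add: distrib_right sum.distrib)
  also have "\<dots> = simple_integral f + simple_integral g"
    using simple_integral_pair[OF f g f, where F = "\<lambda>v w. v"]
      simple_integral_pair[OF f g g, where F = "\<lambda>v w. w"] by simp
  finally show ?thesis .
qed

lemma simple_integral_sum:
  assumes "finite K" "\<And>k. k \<in> K \<Longrightarrow> finite (range (f k))"
  shows "simple_integral (\<lambda>x. \<Sum>k\<in>K. f k x) = (\<Sum>k\<in>K. simple_integral (f k))"
  using assms
proof (induction K rule: finite_induct)
  case (insert a K)
  have "simple_integral (\<lambda>x. \<Sum>k\<in>insert a K. f k x)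
      = simple_integral (\<lambda>x. f a x + (\<Sum>k\<in>K. f k x))"
    using insert.hyps by simp
  also have "\<dots> = simple_integral (f a) + simple_integral (\<lambda>x. \<Sum>k\<in>K. f k x)"
    using insert by (intro simple_integral_add finite_range_sum) auto
  finally show ?case using insert by simp
qed simp

lemma simple_integral_step_function:
  assumes "finite K"
  shows "simple_integral (\<lambda>x. a + (\<Sum>k\<in>K. c k * indicator (F k) x)) = a + (\<Sum>k\<in>K. c k * \<mu> (F k))"
proof -
  have fin: "finite (range (\<lambda>x. c k * indicator (F k) x :: real))" for k
    by (rule finite_range_imageI[OF finite_range_indicator])
  have "simple_integral (\<lambda>x. a + 1 * (\<Sum>k\<in>K. c k * indicator (F k) x))
      = a + 1 * (\<Sum>k\<in>K. simple_integral (\<lambda>x. c k * indicator (F k) x))"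
    by (simp only: simple_integral_affine[OF finite_range_sum[OF assms fin]] simple_integral_sum[OF assms fin])
  then show ?thesis
    by (simp add: simple_integral_indicator)
qed

lemma simple_integral_mono:
  assumes f: "finite (range f)" and g: "finite (range g)" and le: "\<And>x. f x \<le> g x"
  shows "simple_integral f \<le> simple_integral g"
proof -
  let ?P = "\<lambda>z. \<mu> {x. (f x, g x) = z}" and ?W = "range f \<times> range g"
  have "fst z * ?P z \<le> snd z * ?P z" for z
  proof (cases "\<exists>x. (f x, g x) = z")
    case True
    then have "fst z \<le> snd z" using le by auto
    then show ?thesis by (simp add: mult_right_mono nonneg)
  qed simp
  then have "(\<Sum>z\<in>?W. fst z * ?P z) \<le> (\<Sum>z\<in>?W. snd z * ?P z)"
    by (rule sum_mono)
  then show ?thesis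
    using simple_integral_pair[OF f g f, where F = "\<lambda>v w. v"]
      simple_integral_pair[OF f g g, where F = "\<lambda>v w. w"] by simp
qed

end

section \<open>The finitely additive integral\<close>

lemma LIMSEQ_SUP_of_le_add:
  fixes S :: "nat \<Rightarrow> real"
  assumes le: "\<And>m n. S n \<le> S m + d m" and d: "d \<longlonglongrightarrow> 0"
  shows "S \<longlonglongrightarrow> (SUP n. S n)"
proof (rule real_tendsto_sandwich)
  have bdd: "bdd_above (range S)"
    by (rule bdd_aboveI2[where M = "S 0 + d 0"]) (rule le)
  show "\<forall>\<^sub>F n in sequentially. (SUP n. S n) - d n \<le> S n"
    using le by (auto intro!: always_eventually cSUP_least simp: algebra_simps)
  show "\<forall>\<^sub>F n in sequentially. S n \<le> (SUP n. S n)"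
    using bdd by (auto intro: always_eventually cSUP_upper)
  show "(\<lambda>n. (SUP n. S n) - d n) \<longlonglongrightarrow> (SUP n. S n)"
    using tendsto_diff[OF tendsto_const d] by simp
qed simp

text \<open>fa_integral is by definition the limit of the simple integrals of these step functions.\<close>

definition grid_floor :: "nat \<Rightarrow> ('a \<Rightarrow> real) \<Rightarrow> 'a \<Rightarrow> real" where
  "grid_floor n \<psi> x = of_int \<lfloor>real (Suc n) * \<psi> x\<rfloor> / real (Suc n)"

lemma grid_floor_le: "grid_floor n \<psi> x \<le> \<psi> x"
  using of_int_floor_le[of "real (Suc n) * \<psi> x"]
  by (simp add: grid_floor_def divide_le_eq mult.commute)

lemma le_add_grid_floor: "\<psi> x \<le> 1 / real (Suc n) + grid_floor n \<psi> x"
  using real_of_int_floor_add_one_ge[of "real (Suc n) * \<psi> x"]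
  by (simp add: grid_floor_def add_divide_distrib[symmetric] le_divide_eq mult.commute add.commute)

lemma finite_range_floor_scaled:
  fixes \<psi> :: "'a \<Rightarrow> real"
  assumes "bounded (range \<psi>)"
  shows "finite (range (\<lambda>x. \<lfloor>c * \<psi> x\<rfloor>))"
proof -
  obtain B where B: "\<And>x. \<bar>\<psi> x\<bar> \<le> B"
    using assms by (auto simp: bounded_real)
  have "\<lfloor>c * \<psi> x\<rfloor> \<in> {\<lfloor>- (\<bar>c\<bar> * B)\<rfloor>..\<lfloor>\<bar>c\<bar> * B\<rfloor>}" for x
  proof -
    have "\<bar>c * \<psi> x\<bar> \<le> \<bar>c\<bar> * B"
      using B[of x] by (simp add: abs_mult mult_left_mono)
    then have "- (\<bar>c\<bar> * B) \<le> c * \<psi> x" "c * \<psi> x \<le> \<bar>c\<bar> * B"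
      by (simp_all add: abs_le_iff)
    then show ?thesis by (simp add: floor_mono)
  qed
  then show ?thesis
    by (intro finite_subset[OF _ finite_atLeastAtMost_int]) blast
qed

lemma finite_range_grid_floor:
  "bounded (range \<psi>) \<Longrightarrow> finite (range (grid_floor n \<psi>))"
  unfolding grid_floor_def by (rule finite_range_imageI[OF finite_range_floor_scaled])

context fa_prob
begin

lemma fa_integral_grid_LIMSEQ:
  assumes bnd: "bounded (range \<psi>)"
  shows "(\<lambda>n. simple_integral (grid_floor n \<psi>)) \<longlonglongrightarrow> fa_integral \<mu> \<psi>"
proof -
  let ?S = "\<lambda>n. simple_integral (grid_floor n \<psi>)"
  have fin: "finite (range (grid_floor n \<psi>))" for n
    by (rule finite_range_grid_floor[OF bnd])
  have "?S n \<le> ?S m + 1 / real (Suc m)" for m n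
  proof -
    have "grid_floor n \<psi> x \<le> 1 / real (Suc m) + 1 * grid_floor m \<psi> x" for x
      using grid_floor_le[of n \<psi> x] le_add_grid_floor[of \<psi> x m] by simp
    then have "?S n \<le> simple_integral (\<lambda>x. 1 / real (Suc m) + 1 * grid_floor m \<psi> x)"
      by (rule simple_integral_mono[OF fin finite_range_imageI[OF fin]])
    also have "\<dots> = 1 / real (Suc m) + 1 * ?S m"
      by (rule simple_integral_affine[OF fin])
    finally show ?thesis by simp
  qed
  then have "?S \<longlonglongrightarrow> (SUP n. ?S n)"
    by (rule LIMSEQ_SUP_of_le_add) (rule LIMSEQ_Suc[OF lim_const_over_n])
  moreover have "?S n = (\<Sum>k\<in>range (\<lambda>x. \<lfloor>real (Suc n) * \<psi> x\<rfloor>).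
      of_int k / real (Suc n) * \<mu> {x. \<lfloor>real (Suc n) * \<psi> x\<rfloor> = k})" for n
    by (rule simple_integral_factor[OF finite_range_floor_scaled[OF bnd] _ fin])
      (auto simp: grid_floor_def)
  ultimately show ?thesis
    unfolding fa_integral_def by (simp add: limI)
qed

lemma simple_integral_le_fa_integral:
  assumes bnd: "bounded (range \<psi>)" and h: "finite (range h)" "\<And>x. h x \<le> \<psi> x"
  shows "simple_integral h \<le> fa_integral \<mu> \<psi>"
proof (rule LIMSEQ_le_const)
  have fin: "finite (range (grid_floor n \<psi>))" for n
    by (rule finite_range_grid_floor[OF bnd])
  show "(\<lambda>n. 1 / real (Suc n) + 1 * simple_integral (grid_floor n \<psi>)) \<longlonglongrightarrow> fa_integral \<mu> \<psi>"
    using tendsto_add[OF LIMSEQ_Suc[OF lim_const_over_n] fa_integral_grid_LIMSEQ[OF bnd]] by simp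
  show "\<exists>N. \<forall>n\<ge>N. simple_integral h \<le> 1 / real (Suc n) + 1 * simple_integral (grid_floor n \<psi>)"
  proof (intro exI allI impI)
    fix n
    have "h x \<le> 1 / real (Suc n) + 1 * grid_floor n \<psi> x" for x
      using h(2)[of x] le_add_grid_floor[of \<psi> x n] by simp
    then have "simple_integral h \<le> simple_integral (\<lambda>x. 1 / real (Suc n) + 1 * grid_floor n \<psi> x)"
      by (rule simple_integral_mono[OF h(1) finite_range_imageI[OF fin]])
    then show "simple_integral h \<le> 1 / real (Suc n) + 1 * simple_integral (grid_floor n \<psi>)"
      by (simp only: simple_integral_affine[OF fin])
  qed
qed

lemma fa_integral_le_simple_integral:
  assumes bnd: "bounded (range \<psi>)" and h: "finite (range h)" "\<And>x. \<psi> x \<le> h x"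
  shows "fa_integral \<mu> \<psi> \<le> simple_integral h"
proof (rule LIMSEQ_le_const2[OF fa_integral_grid_LIMSEQ[OF bnd]], intro exI allI impI)
  fix n
  have "grid_floor n \<psi> x \<le> h x" for x
    using grid_floor_le[of n \<psi> x] h(2)[of x] by linarith
  then show "simple_integral (grid_floor n \<psi>) \<le> simple_integral h"
    by (rule simple_integral_mono[OF finite_range_grid_floor[OF bnd] h(1)])
qed

lemma fa_integral_uminus:
  assumes bnd: "bounded (range \<psi>)"
  shows "fa_integral \<mu> (\<lambda>x. - \<psi> x) = - fa_integral \<mu> \<psi>"
proof (rule antisym)
  let ?S = "\<lambda>n. simple_integral (grid_floor n \<psi>)"
  have bnd': "bounded (range (\<lambda>x. - \<psi> x))"
    using bnd bounded_uminus[of "range \<psi>"] by (simp add: image_image)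
  have fin: "finite (range (grid_floor n \<psi>))" for n
    by (rule finite_range_grid_floor[OF bnd])
  have S: "?S \<longlonglongrightarrow> fa_integral \<mu> \<psi>"
    by (rule fa_integral_grid_LIMSEQ[OF bnd])
  have "fa_integral \<mu> (\<lambda>x. - \<psi> x) \<le> simple_integral (\<lambda>x. 0 + (- 1) * grid_floor n \<psi> x)" for n
    using grid_floor_le[of n \<psi>]
    by (intro fa_integral_le_simple_integral[OF bnd' finite_range_imageI[OF fin]]) simp
  then have "fa_integral \<mu> (\<lambda>x. - \<psi> x) \<le> - ?S n" for n
    by (simp only: simple_integral_affine[OF fin]) simp
  then show "fa_integral \<mu> (\<lambda>x. - \<psi> x) \<le> - fa_integral \<mu> \<psi>"
    by (intro LIMSEQ_le_const[OF tendsto_minus[OF S]]) auto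
  have "simple_integral (\<lambda>x. - (1 / real (Suc n)) + (- 1) * grid_floor n \<psi> x) \<le> fa_integral \<mu> (\<lambda>x. - \<psi> x)" for n
    using le_add_grid_floor[of \<psi> _ n]
    by (intro simple_integral_le_fa_integral[OF bnd' finite_range_imageI[OF fin]]) (simp add: algebra_simps)
  then have "- (1 / real (Suc n)) - ?S n \<le> fa_integral \<mu> (\<lambda>x. - \<psi> x)" for n
    by (simp only: simple_integral_affine[OF fin]) simp
  moreover have "(\<lambda>n. - (1 / real (Suc n)) - ?S n) \<longlonglongrightarrow> - fa_integral \<mu> \<psi>"
    using tendsto_diff[OF tendsto_minus[OF LIMSEQ_Suc[OF lim_const_over_n]] S] by simp
  ultimately show "- fa_integral \<mu> \<psi> \<le> fa_integral \<mu> (\<lambda>x. - \<psi> x)"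
    by (intro LIMSEQ_le_const2) auto
qed

lemma fa_integral_le_grid_floor:
  assumes bnd: "bounded (range \<psi>)"
  shows "fa_integral \<mu> \<psi> \<le> 1 / real (Suc n) + simple_integral (grid_floor n \<psi>)"
proof -
  have fin: "finite (range (grid_floor n \<psi>))"
    by (rule finite_range_grid_floor[OF bnd])
  have "fa_integral \<mu> \<psi> \<le> simple_integral (\<lambda>x. 1 / real (Suc n) + 1 * grid_floor n \<psi> x)"
    using le_add_grid_floor[of \<psi> _ n]
    by (intro fa_integral_le_simple_integral[OF bnd finite_range_imageI[OF fin]]) simp
  then show ?thesis
    by (simp only: simple_integral_affine[OF fin])
qed

end

section \<open>Upper Cesaro densities\<close>

lemma ereal_real_limsup_bounded:
  fixes x :: "nat \<Rightarrow> real"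
  assumes "\<And>n. \<bar>x n\<bar> \<le> C"
  shows "ereal (real_of_ereal (limsup (\<lambda>n. ereal (x n)))) = limsup (\<lambda>n. ereal (x n))"
proof -
  have "- C \<le> x n" "x n \<le> C" for n
    using assms[of n] by (simp_all add: abs_le_iff)
  then have "limsup (\<lambda>n. ereal (x n)) \<le> ereal C" "ereal (- C) \<le> limsup (\<lambda>n. ereal (x n))"
    by (auto intro: Limsup_bounded le_Limsup[OF sequentially_bot always_eventually])
  then show ?thesis by (cases "limsup (\<lambda>n. ereal (x n))") auto
qed

lemma eventually_less_real_limsup:
  fixes x :: "nat \<Rightarrow> real"
  assumes "\<And>n. \<bar>x n\<bar> \<le> C" "0 < e"
  shows "\<forall>\<^sub>F n in sequentially. x n < real_of_ereal (limsup (\<lambda>n. ereal (x n))) + e"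
proof -
  define L where "L = real_of_ereal (limsup (\<lambda>n. ereal (x n)))"
  have "limsup (\<lambda>n. ereal (x n)) < ereal (L + e)"
    using assms(2) ereal_real_limsup_bounded[of x C, OF assms(1), symmetric] by (simp add: L_def[symmetric])
  then have "\<forall>\<^sub>F n in sequentially. ereal (x n) < ereal (L + e)"
    by (rule Limsup_lessD)
  then show ?thesis
    unfolding L_def by simp
qed

lemma real_limsup_le:
  fixes x :: "nat \<Rightarrow> real"
  assumes "\<And>n. \<bar>x n\<bar> \<le> C" "\<And>e. 0 < e \<Longrightarrow> \<forall>\<^sub>F n in sequentially. x n \<le> c + e"
  shows "real_of_ereal (limsup (\<lambda>n. ereal (x n))) \<le> c"
proof -
  define L where "L = real_of_ereal (limsup (\<lambda>n. ereal (x n)))"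
  have "limsup (\<lambda>n. ereal (x n)) \<le> ereal c"
  proof (rule ereal_le_epsilon2)
    fix e :: real assume "0 < e"
    have "limsup (\<lambda>n. ereal (x n)) \<le> ereal (c + e)"
      by (rule Limsup_bounded) (use assms(2)[OF \<open>0 < e\<close>] in \<open>auto elim: eventually_mono\<close>)
    then show "limsup (\<lambda>n. ereal (x n)) \<le> ereal c + ereal e" by simp
  qed
  then show ?thesis
    using ereal_real_limsup_bounded[of x C, OF assms(1), symmetric] by (simp add: L_def[symmetric])
qed

definition cesaro_mean :: "(nat \<Rightarrow> 'a set \<Rightarrow> real) \<Rightarrow> nat \<Rightarrow> 'a set \<Rightarrow> real" where
  "cesaro_mean \<xi> n A = (\<Sum>j<n. \<xi> j A) / real n"

locale fa_prob_seq =
  fixes \<xi> :: "nat \<Rightarrow> 'a set \<Rightarrow> real"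
  assumes fa_outer_prob_seq: "fa_outer_prob_seq \<xi>"
begin

lemma fa_prob: "fa_prob (\<xi> j)"
  using fa_outer_prob_seq unfolding fa_outer_prob_seq_def fa_prob_def by blast

lemma cesaro_mean_mono:
  assumes "A \<subseteq> B"
  shows "cesaro_mean \<xi> n A \<le> cesaro_mean \<xi> n B"
  unfolding cesaro_mean_def
  by (intro divide_right_mono sum_mono fa_prob.mono[OF fa_prob assms]) simp

lemma cesaro_mean_bounds: "0 \<le> cesaro_mean \<xi> n A" "cesaro_mean \<xi> n A \<le> 1"
proof -
  have "cesaro_mean \<xi> n {} \<le> cesaro_mean \<xi> n A" "cesaro_mean \<xi> n A \<le> cesaro_mean \<xi> n UNIV"
    by (simp_all add: cesaro_mean_mono)
  moreover have "cesaro_mean \<xi> n {} = 0" "cesaro_mean \<xi> n UNIV \<le> 1"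
    by (simp_all add: cesaro_mean_def fa_prob.empty[OF fa_prob] fa_prob.prob_UNIV[OF fa_prob])
  ultimately show "0 \<le> cesaro_mean \<xi> n A" "cesaro_mean \<xi> n A \<le> 1"
    by simp_all
qed

lemma abs_cesaro_mean_le: "\<bar>cesaro_mean \<xi> n A\<bar> \<le> 1"
  using cesaro_mean_bounds[of n A] by simp

lemma tau_set_cesaro_mean: "tau_set \<xi> A = real_of_ereal (limsup (\<lambda>n. ereal (cesaro_mean \<xi> n A)))"
  unfolding tau_set_def cesaro_mean_def ..

lemma tau_set_nonneg: "0 \<le> tau_set \<xi> A"
  unfolding tau_set_cesaro_mean
  by (intro real_of_ereal_pos le_Limsup[OF sequentially_bot always_eventually])
    (simp add: cesaro_mean_bounds)

lemma eventually_cesaro_mean_less: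
  "0 < e \<Longrightarrow> \<forall>\<^sub>F n in sequentially. cesaro_mean \<xi> n A < tau_set \<xi> A + e"
  unfolding tau_set_cesaro_mean by (rule eventually_less_real_limsup[OF abs_cesaro_mean_le])

lemma tau_set_le:
  "(\<And>e. 0 < e \<Longrightarrow> \<forall>\<^sub>F n in sequentially. cesaro_mean \<xi> n A \<le> c + e) \<Longrightarrow> tau_set \<xi> A \<le> c"
  unfolding tau_set_cesaro_mean by (rule real_limsup_le[OF abs_cesaro_mean_le])

lemma tau_set_mono:
  assumes "A \<subseteq> B"
  shows "tau_set \<xi> A \<le> tau_set \<xi> B"
proof (rule tau_set_le)
  fix e :: real assume "0 < e"
  from eventually_cesaro_mean_less[OF this, of B]
  show "\<forall>\<^sub>F n in sequentially. cesaro_mean \<xi> n A \<le> tau_set \<xi> B + e"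
  proof (rule eventually_mono)
    fix n assume "cesaro_mean \<xi> n B < tau_set \<xi> B + e"
    then show "cesaro_mean \<xi> n A \<le> tau_set \<xi> B + e"
      using cesaro_mean_mono[OF assms, of n] by linarith
  qed
qed

lemma tau_set_Un_le: "tau_set \<xi> (A \<union> B) \<le> tau_set \<xi> A + tau_set \<xi> B"
proof (rule tau_set_le)
  fix e :: real assume "0 < e"
  have sub: "cesaro_mean \<xi> n (A \<union> B) \<le> cesaro_mean \<xi> n A + cesaro_mean \<xi> n B" for n
    unfolding cesaro_mean_def add_divide_distrib[symmetric] sum.distrib[symmetric]
    by (intro divide_right_mono sum_mono fa_prob.subadditive[OF fa_prob]) simp
  have "0 < e / 2" using \<open>0 < e\<close> by simp
  from eventually_conj[OF eventually_cesaro_mean_less[OF this, of A] eventually_cesaro_mean_less[OF this, of B]]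
  show "\<forall>\<^sub>F n in sequentially. cesaro_mean \<xi> n (A \<union> B) \<le> tau_set \<xi> A + tau_set \<xi> B + e"
  proof (rule eventually_mono)
    fix n
    assume "cesaro_mean \<xi> n A < tau_set \<xi> A + e / 2 \<and> cesaro_mean \<xi> n B < tau_set \<xi> B + e / 2"
    then show "cesaro_mean \<xi> n (A \<union> B) \<le> tau_set \<xi> A + tau_set \<xi> B + e"
      using sub[of n] by linarith
  qed
qed

lemma tau_set_UN_le:
  "finite J \<Longrightarrow> tau_set \<xi> (\<Union>i\<in>J. I i) \<le> (\<Sum>i\<in>J. tau_set \<xi> (I i))"
proof (induction J rule: finite_induct)
  case empty
  show ?case
    by (rule tau_set_le) (simp add: cesaro_mean_def fa_prob.empty[OF fa_prob])
next
  case (insert a J)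
  then show ?case
    using tau_set_Un_le[of "I a" "\<Union>i\<in>J. I i"] by simp
qed

lemma cesaro_mean_combination:
  assumes "0 < n"
  shows "(\<Sum>j<n. a + (\<Sum>k\<in>K. c k * \<xi> j (F k))) / real n = a + (\<Sum>k\<in>K. c k * cesaro_mean \<xi> n (F k))"
proof -
  have "(\<Sum>j<n. a + (\<Sum>k\<in>K. c k * \<xi> j (F k))) = real n * a + (\<Sum>k\<in>K. c k * (\<Sum>j<n. \<xi> j (F k)))"
    by (simp add: sum.distrib sum_distrib_left sum.swap[of _ K])
  then show ?thesis
    using assms by (simp add: cesaro_mean_def add_divide_distrib sum_divide_distrib[symmetric])
qed

lemma eventually_cesaro_less_tau_combination:
  assumes K: "finite K" and c: "\<And>k. k \<in> K \<Longrightarrow> 0 \<le> c k"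
    and x: "\<And>j. x j \<le> a + (\<Sum>k\<in>K. c k * \<xi> j (F k))" and e: "0 < e"
  shows "\<forall>\<^sub>F n in sequentially. (\<Sum>j<n. x j) / real n < a + (\<Sum>k\<in>K. c k * tau_set \<xi> (F k)) + e"
proof -
  define C where "C = (\<Sum>k\<in>K. c k)"
  define d where "d = e / (C + 1)"
  have "0 \<le> C" unfolding C_def using c by (rule sum_nonneg)
  then have d: "0 < d" "C * d < e"
    using e by (simp_all add: d_def field_simps)
  have "\<forall>\<^sub>F n in sequentially. \<forall>k\<in>K. cesaro_mean \<xi> n (F k) < tau_set \<xi> (F k) + d"
    using K by (intro eventually_ball_finite ballI eventually_cesaro_mean_less[OF d(1)])
  then have "\<forall>\<^sub>F n in sequentially. (\<forall>k\<in>K. cesaro_mean \<xi> n (F k) < tau_set \<xi> (F k) + d) \<and> 0 < n"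
    by (rule eventually_conj) (rule eventually_gt_at_top)
  then show ?thesis
  proof (rule eventually_mono)
    fix n assume n: "(\<forall>k\<in>K. cesaro_mean \<xi> n (F k) < tau_set \<xi> (F k) + d) \<and> 0 < n"
    have "(\<Sum>j<n. x j) / real n \<le> (\<Sum>j<n. a + (\<Sum>k\<in>K. c k * \<xi> j (F k))) / real n"
      by (intro divide_right_mono sum_mono x) simp
    also have "\<dots> = a + (\<Sum>k\<in>K. c k * cesaro_mean \<xi> n (F k))"
      using n by (simp add: cesaro_mean_combination)
    also have "\<dots> \<le> a + (\<Sum>k\<in>K. c k * (tau_set \<xi> (F k) + d))"
      using n c by (intro add_left_mono sum_mono mult_left_mono) auto
    also have "\<dots> = a + (\<Sum>k\<in>K. c k * tau_set \<xi> (F k)) + C * d"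
      by (simp add: C_def distrib_left sum.distrib sum_distrib_right)
    also have "\<dots> < a + (\<Sum>k\<in>K. c k * tau_set \<xi> (F k)) + e"
      using d by simp
    finally show "(\<Sum>j<n. x j) / real n < a + (\<Sum>k\<in>K. c k * tau_set \<xi> (F k)) + e" .
  qed
qed

end

section \<open>Comparison with eta\<close>

lemma tau_set_le_nu:
  fixes \<xi> :: "nat \<Rightarrow> 'a::metric_space set \<Rightarrow> real"
  assumes "fa_outer_prob_seq \<xi>" "compact F"
  shows "ennreal (tau_set \<xi> F) \<le> nu \<xi> F"
proof -
  interpret fa_prob_seq \<xi> by (rule fa_prob_seq.intro[OF assms(1)])
  have "ennreal (tau_set \<xi> F) \<le> nu_r \<xi> 1 F"
    unfolding nu_r_def
  proof (rule INF_greatest, clarify)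
    fix I :: "nat \<Rightarrow> 'a set"
    assume "\<forall>n. open (I n) \<and> diameter (I n) \<le> 1" and cover: "F \<subseteq> (\<Union>n. I n)"
    then obtain J where J: "finite J" "F \<subseteq> (\<Union>n\<in>J. I n)"
      using compactE_image[OF assms(2), of UNIV I] by auto
    have "tau_set \<xi> F \<le> (\<Sum>n\<in>J. tau_set \<xi> (I n))"
      using tau_set_mono[OF J(2)] tau_set_UN_le[OF J(1)] by (rule order_trans)
    then have "ennreal (tau_set \<xi> F) \<le> (\<Sum>n\<in>J. ennreal (tau_set \<xi> (I n)))"
      by (simp add: sum_ennreal tau_set_nonneg ennreal_leI)
    also have "\<dots> \<le> (\<Sum>n. ennreal (tau_set \<xi> (I n)))"
      by (rule sum_le_suminf) (auto simp: J(1))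
    finally show "ennreal (tau_set \<xi> F) \<le> (\<Sum>n. ennreal (tau_set \<xi> (I n)))" .
  qed
  also have "\<dots> \<le> nu \<xi> F"
    unfolding nu_def by (rule SUP_upper) simp
  finally show ?thesis .
qed

lemma sets_eta [simp]: "sets (eta \<xi>) = sets borel"
  unfolding eta_def by (metis sets.sigma_sets_eq sets_measure_of sets.space_closed space_borel)

lemma space_eta [simp]: "space (eta \<xi>) = UNIV"
  unfolding eta_def by (simp add: space_measure_of_conv)

lemma emeasure_eta:
  assumes "eta_is_prob \<xi>" "A \<in> sets borel"
  shows "emeasure (eta \<xi>) A = nu \<xi> A"
  unfolding eta_def
  by (rule emeasure_measure_of_sigma) (use assms in \<open>auto simp: eta_is_prob_def measure_space_def\<close>)

lemma prob_space_eta: "eta_is_prob \<xi> \<Longrightarrow> prob_space (eta \<xi>)"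
  by (rule prob_spaceI) (simp add: emeasure_eta eta_is_prob_def)

lemma tau_set_le_measure_eta:
  fixes \<xi> :: "nat \<Rightarrow> 'a::metric_space set \<Rightarrow> real"
  assumes "compact (UNIV :: 'a set)" "fa_outer_prob_seq \<xi>" "eta_is_prob \<xi>" "closed F"
  shows "tau_set \<xi> F \<le> measure (eta \<xi>) F"
proof -
  interpret prob_space "eta \<xi>" by (rule prob_space_eta[OF assms(3)])
  have "ennreal (tau_set \<xi> F) \<le> nu \<xi> F"
    using assms compact_Int_closed[of UNIV F] by (intro tau_set_le_nu) auto
  also have "\<dots> = ennreal (measure (eta \<xi>) F)"
    using assms(3,4) by (simp add: emeasure_eta[symmetric] emeasure_eq_measure)
  finally show ?thesis by (simp add: ennreal_le_iff)
qed

lemma of_int_eq_sum_of_bool: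
  fixes m :: int
  assumes "a \<le> m" "m \<le> b"
  shows "(of_int m :: real) = of_int a + (\<Sum>k\<in>{a<..b}. of_bool (k \<le> m))"
proof -
  have "{k \<in> {a<..b}. k \<le> m} = {a<..m}"
    using assms by auto
  then have "(\<Sum>k\<in>{a<..b}. of_bool (k \<le> m) :: real) = of_nat (card {a<..m})"
    by (simp add: of_bool_def sum.inter_filter[symmetric])
  then show ?thesis using assms by simp
qed

lemma grid_floor_layer_cake:
  fixes \<psi> :: "'a \<Rightarrow> real"
  assumes "bounded (range \<psi>)"
  obtains a :: real and K :: "int set" where "finite K"
    "\<And>x. grid_floor n \<psi> x
      = a + (\<Sum>k\<in>K. 1 / real (Suc n) * indicator {y. of_int k \<le> real (Suc n) * \<psi> y} x)"
proof -
  let ?N = "real (Suc n)"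
  let ?m = "\<lambda>x. \<lfloor>?N * \<psi> x\<rfloor>"
  define lo where "lo = Min (range ?m)"
  define hi where "hi = Max (range ?m)"
  have fin: "finite (range ?m)"
    by (rule finite_range_floor_scaled[OF assms])
  have "grid_floor n \<psi> x
      = of_int lo / ?N + (\<Sum>k\<in>{lo<..hi}. 1 / ?N * indicator {y. of_int k \<le> ?N * \<psi> y} x)" for x
  proof -
    have "lo \<le> ?m x" "?m x \<le> hi"
      using fin by (auto simp: lo_def hi_def)
    then have "grid_floor n \<psi> x = (of_int lo + (\<Sum>k\<in>{lo<..hi}. of_bool (k \<le> ?m x))) / ?N"
      unfolding grid_floor_def by (subst of_int_eq_sum_of_bool) simp_all
    also have "\<dots> = of_int lo / ?N + (\<Sum>k\<in>{lo<..hi}. 1 / ?N * of_bool (k \<le> ?m x))"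
      by (simp only: add_divide_distrib sum_distrib_left[symmetric]) simp
    also have "(\<lambda>k. of_bool (k \<le> ?m x)) = (\<lambda>k. indicator {y. of_int k \<le> ?N * \<psi> y} x :: real)"
      by (simp add: indicator_def le_floor_iff)
    finally show ?thesis .
  qed
  then show thesis
    by (rule that[rotated]) simp
qed

lemma (in prob_space) integral_step_function:
  assumes "finite K" "\<And>k. k \<in> K \<Longrightarrow> F k \<in> events"
  shows "integrable M (\<lambda>x. a + (\<Sum>k\<in>K. c k * indicator (F k) x))"
    and "integral\<^sup>L M (\<lambda>x. a + (\<Sum>k\<in>K. c k * indicator (F k) x)) = a + (\<Sum>k\<in>K. c k * prob (F k))"
proof -
  have ind: "integrable M (\<lambda>x. c k * indicator (F k) x)" if "k \<in> K" for k
    using assms(2)[OF that] by (simp add: emeasure_eq_measure)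
  then show "integrable M (\<lambda>x. a + (\<Sum>k\<in>K. c k * indicator (F k) x))"
    by simp
  have "integral\<^sup>L M (\<lambda>x. a + (\<Sum>k\<in>K. c k * indicator (F k) x))
      = a + (\<Sum>k\<in>K. integral\<^sup>L M (\<lambda>x. c k * indicator (F k) x))"
    using ind by (simp add: integral_add integral_sum prob_space)
  also have "\<dots> = a + (\<Sum>k\<in>K. c k * prob (F k))"
    using assms(2) by (simp add: Int_absorb2 sets.sets_into_space)
  finally show "integral\<^sup>L M (\<lambda>x. a + (\<Sum>k\<in>K. c k * indicator (F k) x)) = a + (\<Sum>k\<in>K. c k * prob (F k))" .
qed

lemma integrable_eta_continuous:
  fixes \<psi> :: "'a::metric_space \<Rightarrow> real"
  assumes "compact (UNIV :: 'a set)" "eta_is_prob \<xi>" "continuous_on UNIV \<psi>"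
  shows "integrable (eta \<xi>) \<psi>"
proof -
  interpret prob_space "eta \<xi>" by (rule prob_space_eta[OF assms(2)])
  obtain B where "\<And>x. \<bar>\<psi> x\<bar> \<le> B"
    using compact_imp_bounded[OF compact_continuous_image[OF assms(3,1)]] by (auto simp: bounded_real)
  moreover have "\<psi> \<in> borel_measurable (eta \<xi>)"
    using borel_measurable_continuous_onI[OF assms(3)] by (simp add: measurable_cong_sets[OF sets_eta refl])
  ultimately show ?thesis
    by (intro integrable_const_bound[where B = B]) auto
qed

lemma eventually_cesaro_fa_integral_less:
  fixes \<xi> :: "nat \<Rightarrow> 'a::metric_space set \<Rightarrow> real" and \<psi> :: "'a \<Rightarrow> real"
  assumes cpt: "compact (UNIV :: 'a set)" and xi: "fa_outer_prob_seq \<xi>" and P: "eta_is_prob \<xi>"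
    and \<psi>: "continuous_on UNIV \<psi>" and e: "0 < e"
  shows "\<forall>\<^sub>F n in sequentially. (\<Sum>j<n. fa_integral (\<xi> j) \<psi>) / real n < integral\<^sup>L (eta \<xi>) \<psi> + e"
proof -
  interpret fa_prob_seq \<xi> by (rule fa_prob_seq.intro[OF xi])
  interpret \<eta>: prob_space "eta \<xi>" by (rule prob_space_eta[OF P])
  have bnd: "bounded (range \<psi>)"
    using compact_continuous_image[OF \<psi> cpt] by (rule compact_imp_bounded)
  have "0 < e / 2" using e by simp
  then obtain n where n: "inverse (real (Suc n)) < e / 2"
    using reals_Archimedean by blast
  define N where "N = real (Suc n)"
  define F where "F k = {y. of_int k \<le> N * \<psi> y}" for k :: int
  obtain a K where K: "finite K" and layers: "\<And>x. grid_floor n \<psi> x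
      = a + (\<Sum>k\<in>K. 1 / real (Suc n) * indicator {y. of_int k \<le> real (Suc n) * \<psi> y} x)"
    using grid_floor_layer_cake[OF bnd, where n = n] by metis
  have step: "grid_floor n \<psi> = (\<lambda>x. a + (\<Sum>k\<in>K. 1 / N * indicator (F k) x))"
    unfolding N_def F_def by (rule ext) (rule layers)
  have F_closed: "closed (F k)" for k
    unfolding F_def by (intro closed_Collect_le continuous_intros \<psi>)
  have per_j: "fa_integral (\<xi> j) \<psi> \<le> (a + 1 / N) + (\<Sum>k\<in>K. 1 / N * \<xi> j (F k))" for j
    using fa_prob.fa_integral_le_grid_floor[OF fa_prob bnd, of j n]
    unfolding step fa_prob.simple_integral_step_function[OF fa_prob K] N_def by simp
  have ev: "\<forall>\<^sub>F n in sequentially.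
      (\<Sum>j<n. fa_integral (\<xi> j) \<psi>) / real n < (a + 1 / N) + (\<Sum>k\<in>K. 1 / N * tau_set \<xi> (F k)) + e / 2"
    by (rule eventually_cesaro_less_tau_combination[OF K _ per_j]) (use e in \<open>simp_all add: N_def\<close>)
  have "(\<Sum>k\<in>K. 1 / N * tau_set \<xi> (F k)) \<le> (\<Sum>k\<in>K. 1 / N * measure (eta \<xi>) (F k))"
    using tau_set_le_measure_eta[OF cpt xi P F_closed] by (intro sum_mono mult_left_mono) (simp_all add: N_def)
  also have "a + \<dots> = integral\<^sup>L (eta \<xi>) (grid_floor n \<psi>)"
    unfolding step by (rule \<eta>.integral_step_function(2)[symmetric]) (use K F_closed in auto)
  also have "\<dots> \<le> integral\<^sup>L (eta \<xi>) \<psi>"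
  proof (rule integral_mono)
    show "integrable (eta \<xi>) (grid_floor n \<psi>)"
      unfolding step by (rule \<eta>.integral_step_function(1)) (use K F_closed in auto)
  qed (simp_all add: grid_floor_le integrable_eta_continuous[OF cpt P \<psi>])
  finally have "a + (\<Sum>k\<in>K. 1 / N * tau_set \<xi> (F k)) \<le> integral\<^sup>L (eta \<xi>) \<psi>"
    by simp
  moreover have "1 / N < e / 2"
    using n by (simp add: N_def inverse_eq_divide)
  ultimately show ?thesis
    using ev by (auto elim: eventually_mono)
qed

lemma cesaro_fa_integral_LIMSEQ:
  fixes \<xi> :: "nat \<Rightarrow> 'a::metric_space set \<Rightarrow> real" and \<psi> :: "'a \<Rightarrow> real"
  assumes cpt: "compact (UNIV :: 'a set)" and xi: "fa_outer_prob_seq \<xi>" and P: "eta_is_prob \<xi>"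
    and \<psi>: "continuous_on UNIV \<psi>"
  shows "(\<lambda>n. (\<Sum>j<n. fa_integral (\<xi> j) \<psi>) / real n) \<longlonglongrightarrow> integral\<^sup>L (eta \<xi>) \<psi>"
proof (rule tendstoI)
  fix e :: real assume e: "0 < e"
  interpret fa_prob_seq \<xi> by (rule fa_prob_seq.intro[OF xi])
  have "bounded (range \<psi>)"
    using compact_continuous_image[OF \<psi> cpt] by (rule compact_imp_bounded)
  then have uminus: "fa_integral (\<xi> j) (\<lambda>x. - \<psi> x) = - fa_integral (\<xi> j) \<psi>" for j
    by (rule fa_prob.fa_integral_uminus[OF fa_prob])
  have "continuous_on UNIV (\<lambda>x. - \<psi> x)"
    by (intro continuous_intros \<psi>)
  from eventually_conj[OF eventually_cesaro_fa_integral_less[OF cpt xi P \<psi> e]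
      eventually_cesaro_fa_integral_less[OF cpt xi P this e]]
  show "\<forall>\<^sub>F n in sequentially. dist ((\<Sum>j<n. fa_integral (\<xi> j) \<psi>) / real n) (integral\<^sup>L (eta \<xi>) \<psi>) < e"
    by (rule eventually_mono) (auto simp: uminus sum_negf dist_real_def)
qed

theorem mainTheorem16:
  fixes \<xi> :: "nat \<Rightarrow> 'a::metric_space set \<Rightarrow> real"
    and \<phi> :: "'a \<Rightarrow> real"
  assumes "compact (UNIV :: 'a set)"
    and "fa_outer_prob_seq \<xi>"
    and "eta_is_prob \<xi>"
    and "continuous_on UNIV \<phi>"
  shows "integral\<^sup>L (eta \<xi>) \<phi> = tau_fun \<xi> \<phi>"
proof -
  have "limsup (\<lambda>n. ereal ((\<Sum>j<n. fa_integral (\<xi> j) \<phi>) / real n)) = ereal (integral\<^sup>L (eta \<xi>) \<phi>)"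
    by (intro lim_imp_Limsup[OF sequentially_bot] tendsto_ereal cesaro_fa_integral_LIMSEQ assms)
  then show ?thesis
    by (simp add: tau_fun_def)
qed

end
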